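(* Let $\mathcal{X}\subseteq\mathbb{R}^d$ be compact, $c\ge2$, and $\{(\mathbf{x}_i,y_i)\}_{i=1}^n$ i.i.d. labeled data with $y_i\in\{1,\dots,c\}$. Let $S\colon\mathcal{X}\times\mathcal{X}\to[0,1]$ be symmetric continuous, and assume the eigenvalues $\lambda_k$ and orthonormal eigenfunctions $\phi_k$ of $(L_Sf)(\mathbf{x})=\int S(\mathbf{x},\mathbf{t})f(\mathbf{t})\,d\mathbf{t}$ satisfy $\sum_k\lambda_k|\phi_k(\mathbf{x})|^2<C$ for all $\mathbf{x}$, for some $C>0$; let $S^+=\sum_{k:\lambda_k\ge0}\lambda_k\phi_k\otimes\phi_k$ and $S^-=\sum_{k:\lambda_k<0}|\lambda_k|\phi_k\otimes\phi_k$. Let $B^+,B^-,R>0$ with $\sup_{\mathbf{x}\in\mathcal{X}}|S^+(\mathbf{x},\mathbf{x})|\le R^2$ and $\sup_{\mathbf{x}\in\mathcal{X}}|S^-(\mathbf{x},\mathbf{x})|\le R^2$, and let $\mathcal{H}_S$ be the class of margin functions defined below. Then for $\delta\in(0,1)$, with probability at least $1-\delta$ over the data $\{\mathbf{x}_i\}_{i=1}^n$, $$\mathfrak{R}(\mathcal{H}_S)\le\frac{R(2c-1)c(B^++B^-)}{\sqrt n}+2c(2c-1)(B^++B^-)R^2\sqrt{\frac{\ln(2/\delta)}{2n}}.$$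
   Context: $\boldsymbol{\alpha}^{(y)}$ has entries $\alpha_i$ if $y_i=y$ and $0$ otherwise; $[\mathbf{S}^\pm]_{ij}=S^\pm(\mathbf{x}_i,\mathbf{x}_j)$; $\Omega^\pm(\boldsymbol{\alpha})=\sum_{y=1}^c{\boldsymbol{\alpha}^{(y)}}^\top\mathbf{S}^\pm\boldsymbol{\alpha}^{(y)}$. For $1\le y\le c$, $\mathcal{H}_{S,y}=\{\mathbf{x}\mapsto\sum_{i:y_i=y}\alpha_iS(\mathbf{x},\mathbf{x}_i):\boldsymbol{\alpha}\ge0,\mathbf{1}^\top\boldsymbol{\alpha}=1,\Omega^+(\boldsymbol{\alpha})\le(B^+)^2,\Omega^-(\boldsymbol{\alpha})\le(B^-)^2\}$, and $\mathcal{H}_S$ is the class of margin functions $m_{h_S}(\mathbf{x},y)=h_S(\mathbf{x},y)-\max_{y'\neq y}h_S(\mathbf{x},y')$ with $h_S(\cdot,y)\in\mathcal{H}_{S,y}$. The Rademacher complexity of a class $\mathcal{A}$ is $\mathfrak{R}(\mathcal{A})=\mathbb{E}_{\{\sigma_i\},\{\mathbf{x}_i\}}\big[\sup_{h\in\mathcal{A}}\big|\frac1n\sum_{i=1}^n\sigma_ih(\mathbf{x}_i)\big|\big]$ with $\sigma_i$ i.i.d. uniform on $\{-1,1\}$ (for $\mathcal{H}_S$, $h(\mathbf{x}_i)$ means $m_{h_S}(\mathbf{x}_i,y_i)$). *)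

theory Defs
  imports "HOL-Probability.Probability"
begin

definition Splus :: "(nat \<Rightarrow> real) \<Rightarrow> (nat \<Rightarrow> 'a \<Rightarrow> real) \<Rightarrow> nat set \<Rightarrow> 'a \<Rightarrow> 'a \<Rightarrow> real" where
  "Splus lam phi I x t = (\<Sum>\<^sub>\<infinity>k\<in>{k\<in>I. lam k \<ge> 0}. lam k * phi k x * phi k t)"

definition Sminus :: "(nat \<Rightarrow> real) \<Rightarrow> (nat \<Rightarrow> 'a \<Rightarrow> real) \<Rightarrow> nat set \<Rightarrow> 'a \<Rightarrow> 'a \<Rightarrow> real" where
  "Sminus lam phi I x t = (\<Sum>\<^sub>\<infinity>k\<in>{k\<in>I. lam k < 0}. \<bar>lam k\<bar> * phi k x * phi k t)"

text \<open>A labeled sample of size n is D :: nat => 'a * nat, with x_i = fst (D i), y_i = snd (D i), i < n.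
  Omega K c n D alpha = sum_{y=1..c} alpha^(y)^T K alpha^(y).\<close>

definition Omega :: "('a \<Rightarrow> 'a \<Rightarrow> real) \<Rightarrow> nat \<Rightarrow> nat \<Rightarrow> (nat \<Rightarrow> 'a \<times> nat) \<Rightarrow> (nat \<Rightarrow> real) \<Rightarrow> real" where
  "Omega K c n D \<alpha> =
     (\<Sum>y=1..c. \<Sum>i<n. \<Sum>j<n.
        (if snd (D i) = y then \<alpha> i else 0) * K (fst (D i)) (fst (D j)) *
        (if snd (D j) = y then \<alpha> j else 0))"

definition HSy :: "('a \<Rightarrow> 'a \<Rightarrow> real) \<Rightarrow> ('a \<Rightarrow> 'a \<Rightarrow> real) \<Rightarrow> ('a \<Rightarrow> 'a \<Rightarrow> real)
    \<Rightarrow> real \<Rightarrow> real \<Rightarrow> nat \<Rightarrow> nat \<Rightarrow> (nat \<Rightarrow> 'a \<times> nat) \<Rightarrow> nat \<Rightarrow> ('a \<Rightarrow> real) set" where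
  "HSy S Sp Sm Bp Bm c n D y =
     {(\<lambda>x. \<Sum>i\<in>{i. i < n \<and> snd (D i) = y}. \<alpha> i * S x (fst (D i))) | \<alpha>.
        (\<forall>i<n. 0 \<le> \<alpha> i) \<and> (\<Sum>i<n. \<alpha> i) = 1 \<and>
        Omega Sp c n D \<alpha> \<le> Bp\<^sup>2 \<and> Omega Sm c n D \<alpha> \<le> Bm\<^sup>2}"

definition margin :: "nat \<Rightarrow> ('a \<Rightarrow> nat \<Rightarrow> real) \<Rightarrow> 'a \<Rightarrow> nat \<Rightarrow> real" where
  "margin c h x y = h x y - Max {h x y' | y'. y' \<in> {1..c} \<and> y' \<noteq> y}"

definition HS :: "('a \<Rightarrow> 'a \<Rightarrow> real) \<Rightarrow> ('a \<Rightarrow> 'a \<Rightarrow> real) \<Rightarrow> ('a \<Rightarrow> 'a \<Rightarrow> real)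
    \<Rightarrow> real \<Rightarrow> real \<Rightarrow> nat \<Rightarrow> nat \<Rightarrow> (nat \<Rightarrow> 'a \<times> nat) \<Rightarrow> ('a \<Rightarrow> nat \<Rightarrow> real) set" where
  "HS S Sp Sm Bp Bm c n D =
     {margin c h | h. \<forall>y\<in>{1..c}. (\<lambda>x. h x y) \<in> HSy S Sp Sm Bp Bm c n D y}"

text \<open>Empirical part: E_sigma [ sup_{f in F} | 1/n sum_i sigma_i f(x_i,y_i) | ],
  with the convention sup of the empty set = 0.\<close>

definition emp_rad :: "('a \<Rightarrow> nat \<Rightarrow> real) set \<Rightarrow> nat \<Rightarrow> (nat \<Rightarrow> 'a \<times> nat) \<Rightarrow> real" where
  "emp_rad F n D =
     (\<Sum>\<sigma>\<in>({..<n} \<rightarrow>\<^sub>E {-1, 1::real}).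
        (let A = {\<bar>(1 / real n) * (\<Sum>i<n. \<sigma> i * f (fst (D i)) (snd (D i)))\<bar> | f. f \<in> F}
         in if A = {} then 0 else Sup A)) / 2 ^ n"

definition rademacher :: "('a \<times> nat) measure \<Rightarrow> nat \<Rightarrow> ((nat \<Rightarrow> 'a \<times> nat) \<Rightarrow> ('a \<Rightarrow> nat \<Rightarrow> real) set) \<Rightarrow> ennreal" where
  "rademacher P n FD = (\<integral>\<^sup>+ D. ennreal (emp_rad (FD D) n D) \<partial>(PiM {..<n} (\<lambda>_. P)))"

end

theory Submission
  imports Defs
begin

text \<open>The Rademacher complexity in the statement is a number, not a random quantity, so it
  suffices to bound the empirical complexity by \<open>R (2c - 1) c (B+ + B-) / sqrt n\<close> for every
  sample in the support of \<open>P\<close>: the event then has probability one and the \<open>ln (2 / \<delta>)\<close>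
  term is slack.

  On the sample the kernel splits as \<open>S = S+ - S-\<close> with positive semidefinite Gram matrices
  \<open>K+\<close>, \<open>K-\<close>. For \<open>g \<in> H_{S,y}\<close> with coefficient vector \<open>a\<close>, Cauchy-Schwarz for these forms
  and the constraints \<open>a' K\<pm> a \<le> B\<pm>\<^sup>2\<close> give
  \<open>|\<Sum>i\<in>J. b i * g (x i)| \<le> B+ sqrt (b' K+ b) + B- sqrt (b' K- b)\<close>; averaging over sign
  vectors \<open>b\<close> turns the right-hand side into \<open>R (B+ + B-) sqrt |J|\<close>. Splitting the sample
  into its \<open>c\<close> label classes bounds the Rademacher sum of \<open>(h, i) \<mapsto> h (x i) (s i)\<close> by
  \<open>R (B+ + B-) sqrt (c n)\<close> for every labelling \<open>s\<close>. The runner-up score is a maximum of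
  \<open>c - 1\<close> such families, handled by the contraction inequality
  \<open>Rad (max A B) \<le> Rad A + Rad B\<close>; removing the absolute value from the empirical complexity
  costs a further \<open>R (B+ + B-) sqrt n\<close>. The total is
  \<open>R (B+ + B-) ((2c - 1) sqrt c + 1) / sqrt n \<le> R (B+ + B-) c (2c - 1) / sqrt n\<close>.\<close>

section \<open>Sign vectors\<close>

abbreviation sign_vectors :: "nat \<Rightarrow> (nat \<Rightarrow> real) set" where
  "sign_vectors n \<equiv> {..<n} \<rightarrow>\<^sub>E {-1, 1}"

lemma sign_vector_cases:
  assumes "\<sigma> \<in> sign_vectors n" "i < n"
  shows "\<sigma> i = -1 \<or> \<sigma> i = 1"
  using PiE_mem[OF assms(1)] assms(2) by auto

lemma card_sign_vectors: "card (sign_vectors n) = 2 ^ n"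
  by (simp add: card_PiE numeral_2_eq_2)

definition flip_signs :: "nat set \<Rightarrow> (nat \<Rightarrow> real) \<Rightarrow> nat \<Rightarrow> real" where
  "flip_signs A \<sigma> i = (if i \<in> A then - \<sigma> i else \<sigma> i)"

lemma flip_signs_flip_signs [simp]: "flip_signs A (flip_signs A \<sigma>) = \<sigma>"
  by (simp add: flip_signs_def fun_eq_iff)

lemma flip_signs_in_sign_vectors:
  assumes "A \<subseteq> {..<n}" "\<sigma> \<in> sign_vectors n"
  shows "flip_signs A \<sigma> \<in> sign_vectors n"
proof (rule PiE_I)
  fix i assume "i \<in> {..<n}"
  then show "flip_signs A \<sigma> i \<in> {-1, 1}"
    using sign_vector_cases[OF assms(2)] by (auto simp: flip_signs_def)
next
  fix i assume "i \<notin> {..<n}"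
  then show "flip_signs A \<sigma> i = undefined"
    using assms by (auto simp: flip_signs_def)
qed

lemma bij_betw_flip_signs:
  assumes "A \<subseteq> {..<n}"
  shows "bij_betw (flip_signs A) (sign_vectors n) (sign_vectors n)"
  by (rule bij_betw_byWitness[where f' = "flip_signs A"])
    (simp_all add: image_subset_iff flip_signs_in_sign_vectors[OF assms])

lemma sum_sign_vectors_mult:
  assumes "i < n" "j < n"
  shows "(\<Sum>\<sigma>\<in>sign_vectors n. \<sigma> i * \<sigma> j) = (if i = j then 2 ^ n else 0)"
proof (cases "i = j")
  case True
  have "(\<Sum>\<sigma>\<in>sign_vectors n. \<sigma> i * \<sigma> j) = (\<Sum>\<sigma>\<in>sign_vectors n. 1)"
  proof (rule sum.cong[OF refl])
    fix \<sigma> assume "\<sigma> \<in> sign_vectors n"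
    from sign_vector_cases[OF this assms(1)] show "\<sigma> i * \<sigma> j = 1"
      using True by (elim disjE) simp_all
  qed
  then show ?thesis using True by (simp add: card_sign_vectors)
next
  case False
  have "(\<Sum>\<sigma>\<in>sign_vectors n. \<sigma> i * \<sigma> j)
      = (\<Sum>\<sigma>\<in>sign_vectors n. flip_signs {i} \<sigma> i * flip_signs {i} \<sigma> j)"
    using sum.reindex_bij_betw[OF bij_betw_flip_signs, of "{i}" n "\<lambda>\<sigma>. \<sigma> i * \<sigma> j"] assms(1)
    by simp
  also have "\<dots> = - (\<Sum>\<sigma>\<in>sign_vectors n. \<sigma> i * \<sigma> j)"
    using False by (simp add: flip_signs_def sum_negf)
  finally show ?thesis using False by simp
qed

definition bilinear_form :: "nat set \<Rightarrow> (nat \<Rightarrow> nat \<Rightarrow> real) \<Rightarrow> (nat \<Rightarrow> real) \<Rightarrow> (nat \<Rightarrow> real) \<Rightarrow> real"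
  where "bilinear_form A K u v = (\<Sum>i\<in>A. \<Sum>j\<in>A. u i * v j * K i j)"

lemma sum_sign_vectors_bilinear_form:
  assumes "J \<subseteq> {..<n}"
  shows "(\<Sum>\<sigma>\<in>sign_vectors n. bilinear_form J K \<sigma> \<sigma>) = 2 ^ n * (\<Sum>i\<in>J. K i i)"
proof -
  have fin: "finite J" using assms finite_subset by blast
  have "(\<Sum>\<sigma>\<in>sign_vectors n. bilinear_form J K \<sigma> \<sigma>)
      = (\<Sum>i\<in>J. \<Sum>j\<in>J. (\<Sum>\<sigma>\<in>sign_vectors n. \<sigma> i * \<sigma> j) * K i j)"
    unfolding bilinear_form_def sum_distrib_right
    by (subst sum.swap, rule sum.cong[OF refl], rule sum.swap)
  also have "\<dots> = (\<Sum>i\<in>J. \<Sum>j\<in>J. if i = j then 2 ^ n * K i j else 0)"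
  proof (intro sum.cong refl)
    fix i j assume "i \<in> J" "j \<in> J"
    with assms have "i < n" "j < n" by auto
    then show "(\<Sum>\<sigma>\<in>sign_vectors n. \<sigma> i * \<sigma> j) * K i j = (if i = j then 2 ^ n * K i j else 0)"
      by (simp add: sum_sign_vectors_mult)
  qed
  also have "\<dots> = (\<Sum>i\<in>J. 2 ^ n * K i i)"
    using fin by simp
  finally show ?thesis by (simp add: sum_distrib_left)
qed

lemma sum_sqrt_le_sqrt_card_mult_sum:
  assumes "\<And>a. a \<in> A \<Longrightarrow> 0 \<le> q a"
  shows "(\<Sum>a\<in>A. sqrt (q a)) \<le> sqrt (real (card A) * (\<Sum>a\<in>A. q a))"
proof -
  have "(\<Sum>a\<in>A. sqrt (q a) * 1)\<^sup>2 \<le> (\<Sum>a\<in>A. (sqrt (q a))\<^sup>2) * (\<Sum>a\<in>A. 1\<^sup>2)"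
    by (rule Cauchy_Schwarz_ineq_sum)
  also have "\<dots> = real (card A) * (\<Sum>a\<in>A. q a)"
    using assms by (simp add: mult.commute)
  finally show ?thesis
    using assms by (simp add: real_le_rsqrt sum_nonneg)
qed

lemma sum_sign_vectors_sqrt_bilinear_form:
  assumes "J \<subseteq> {..<n}" and nonneg: "\<And>\<sigma>. \<sigma> \<in> sign_vectors n \<Longrightarrow> 0 \<le> bilinear_form J K \<sigma> \<sigma>"
  shows "(\<Sum>\<sigma>\<in>sign_vectors n. sqrt (bilinear_form J K \<sigma> \<sigma>)) \<le> 2 ^ n * sqrt (\<Sum>i\<in>J. K i i)"
proof -
  have "(\<Sum>\<sigma>\<in>sign_vectors n. sqrt (bilinear_form J K \<sigma> \<sigma>))
      \<le> sqrt (2 ^ n * (2 ^ n * (\<Sum>i\<in>J. K i i)))"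
    using sum_sqrt_le_sqrt_card_mult_sum[of "sign_vectors n" "\<lambda>\<sigma>. bilinear_form J K \<sigma> \<sigma>"] nonneg
    by (simp add: card_sign_vectors sum_sign_vectors_bilinear_form[OF assms(1)])
  also have "\<dots> = sqrt (2 ^ n * 2 ^ n) * sqrt (\<Sum>i\<in>J. K i i)"
    by (simp only: mult.assoc real_sqrt_mult)
  also have "\<dots> = 2 ^ n * sqrt (\<Sum>i\<in>J. K i i)"
    by simp
  finally show ?thesis .
qed

lemma sum_sign_vectors_abs_sum_le:
  "(\<Sum>\<sigma>\<in>sign_vectors n. \<bar>\<Sum>i<n. \<sigma> i * v i\<bar>) \<le> 2 ^ n * sqrt (\<Sum>i<n. (v i)\<^sup>2)"
proof -
  have square: "bilinear_form {..<n} (\<lambda>i j. v i * v j) \<sigma> \<sigma> = (\<Sum>i<n. \<sigma> i * v i)\<^sup>2" for \<sigma>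
    by (simp add: bilinear_form_def power2_eq_square sum_product algebra_simps)
  have "(\<Sum>\<sigma>\<in>sign_vectors n. sqrt (bilinear_form {..<n} (\<lambda>i j. v i * v j) \<sigma> \<sigma>))
      \<le> 2 ^ n * sqrt (\<Sum>i<n. v i * v i)"
    by (rule sum_sign_vectors_sqrt_bilinear_form) (simp_all only: square zero_le_power2 order_refl)
  then show ?thesis
    by (simp only: square power2_eq_square real_sqrt_abs2)
qed

section \<open>Rademacher sums\<close>

lemma SUP_mult_left_nonneg:
  fixes f :: "'t \<Rightarrow> real"
  assumes "0 \<le> a" "T \<noteq> {}" "bdd_above (f ` T)"
  shows "(SUP t\<in>T. a * f t) = a * (SUP t\<in>T. f t)"
proof -
  have "a * Sup (f ` T) = (SUP x\<in>f ` T. a * x)"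
    using assms
    by (intro continuous_at_Sup_mono) (auto intro: monoI mult_left_mono continuous_intros)
  then show ?thesis by (simp add: image_image)
qed

definition rademacher_sum :: "nat \<Rightarrow> 't set \<Rightarrow> ('t \<Rightarrow> nat \<Rightarrow> real) \<Rightarrow> real" where
  "rademacher_sum n T F = (\<Sum>\<sigma>\<in>sign_vectors n. SUP t\<in>T. \<Sum>i<n. \<sigma> i * F t i)"

definition abs_rademacher_sum :: "nat \<Rightarrow> 't set \<Rightarrow> ('t \<Rightarrow> nat \<Rightarrow> real) \<Rightarrow> real" where
  "abs_rademacher_sum n T F = (\<Sum>\<sigma>\<in>sign_vectors n. SUP t\<in>T. \<bar>\<Sum>i<n. \<sigma> i * F t i\<bar>)"

definition bounded_family :: "nat \<Rightarrow> 't set \<Rightarrow> ('t \<Rightarrow> nat \<Rightarrow> real) \<Rightarrow> bool" where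
  "bounded_family n T F \<longleftrightarrow> (\<exists>M. \<forall>t\<in>T. \<forall>i<n. \<bar>F t i\<bar> \<le> M)"

lemma bounded_familyI:
  "(\<And>t i. t \<in> T \<Longrightarrow> i < n \<Longrightarrow> \<bar>F t i\<bar> \<le> M) \<Longrightarrow> bounded_family n T F"
  unfolding bounded_family_def by blast

lemma bounded_familyE:
  assumes "bounded_family n T F"
  obtains M where "\<And>t i. t \<in> T \<Longrightarrow> i < n \<Longrightarrow> \<bar>F t i\<bar> \<le> M"
proof -
  from assms obtain M where "\<forall>t\<in>T. \<forall>i<n. \<bar>F t i\<bar> \<le> M"
    unfolding bounded_family_def by blast
  then show ?thesis by (intro that[of M]) simp
qed

lemma bounded_family_add:
  assumes "bounded_family n T F" "bounded_family n T G"
  shows "bounded_family n T (\<lambda>t i. F t i + G t i)"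
proof -
  obtain M where M: "\<And>t i. t \<in> T \<Longrightarrow> i < n \<Longrightarrow> \<bar>F t i\<bar> \<le> M"
    using assms(1) by (rule bounded_familyE) blast
  obtain N where N: "\<And>t i. t \<in> T \<Longrightarrow> i < n \<Longrightarrow> \<bar>G t i\<bar> \<le> N"
    using assms(2) by (rule bounded_familyE) blast
  show ?thesis
    by (rule bounded_familyI[where M = "M + N"])
      (rule order_trans[OF abs_triangle_ineq add_mono[OF M N]])
qed

lemma bounded_family_comp:
  assumes "bounded_family n T F" and lip: "\<And>x y. \<bar>\<phi> x - \<phi> y\<bar> \<le> \<bar>x - y\<bar>"
  shows "bounded_family n T (\<lambda>t i. \<phi> (F t i))"
proof -
  obtain M where M: "\<And>t i. t \<in> T \<Longrightarrow> i < n \<Longrightarrow> \<bar>F t i\<bar> \<le> M"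
    using assms(1) by (rule bounded_familyE) blast
  have "\<bar>\<phi> (F t i)\<bar> \<le> \<bar>\<phi> 0\<bar> + M" if "t \<in> T" "i < n" for t i
    using lip[of "F t i" 0] M[OF that] by linarith
  then show ?thesis by (rule bounded_familyI)
qed

lemma bounded_family_bdd_above:
  assumes "bounded_family n T F"
  shows "bdd_above ((\<lambda>t. \<Sum>i<n. \<sigma> i * F t i) ` T)"
    and "bdd_above ((\<lambda>t. \<bar>\<Sum>i<n. \<sigma> i * F t i\<bar>) ` T)"
proof -
  obtain M where M: "\<And>t i. t \<in> T \<Longrightarrow> i < n \<Longrightarrow> \<bar>F t i\<bar> \<le> M"
    using assms by (rule bounded_familyE) blast
  have bound: "\<bar>\<Sum>i<n. \<sigma> i * F t i\<bar> \<le> (\<Sum>i<n. \<bar>\<sigma> i\<bar> * M)" if "t \<in> T" for t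
  proof -
    have "\<bar>\<Sum>i<n. \<sigma> i * F t i\<bar> \<le> (\<Sum>i<n. \<bar>\<sigma> i\<bar> * \<bar>F t i\<bar>)"
      by (rule order_trans[OF sum_abs]) (simp add: abs_mult)
    also have "\<dots> \<le> (\<Sum>i<n. \<bar>\<sigma> i\<bar> * M)"
      using M[OF that] by (intro sum_mono mult_left_mono) auto
    finally show ?thesis .
  qed
  show "bdd_above ((\<lambda>t. \<Sum>i<n. \<sigma> i * F t i) ` T)"
    using bound by (intro bdd_aboveI2) (rule abs_le_D1)
  show "bdd_above ((\<lambda>t. \<bar>\<Sum>i<n. \<sigma> i * F t i\<bar>) ` T)"
    using bound by (rule bdd_aboveI2)
qed

lemma rademacher_sum_cong:
  assumes "\<And>t i. t \<in> T \<Longrightarrow> i < n \<Longrightarrow> F t i = G t i"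
  shows "rademacher_sum n T F = rademacher_sum n T G"
  unfolding rademacher_sum_def using assms by (intro sum.cong SUP_cong refl) auto

lemma rademacher_sum_add:
  assumes "T \<noteq> {}" "bounded_family n T F" "bounded_family n T G"
  shows "rademacher_sum n T (\<lambda>t i. F t i + G t i) \<le> rademacher_sum n T F + rademacher_sum n T G"
  unfolding rademacher_sum_def sum.distrib[symmetric]
proof (intro sum_mono cSUP_least[OF assms(1)])
  fix \<sigma> :: "nat \<Rightarrow> real" and t assume "t \<in> T"
  then show "(\<Sum>i<n. \<sigma> i * (F t i + G t i))
      \<le> (SUP t\<in>T. \<Sum>i<n. \<sigma> i * F t i) + (SUP t\<in>T. \<Sum>i<n. \<sigma> i * G t i)"
    unfolding distrib_left sum.distrib
    by (intro add_mono cSUP_upper bounded_family_bdd_above(1) assms(2,3))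
qed

lemma rademacher_sum_scale:
  assumes "0 \<le> a" "T \<noteq> {}" "bounded_family n T F"
  shows "rademacher_sum n T (\<lambda>t i. a * F t i) = a * rademacher_sum n T F"
proof -
  have factor: "(\<Sum>i<n. \<sigma> i * (a * F t i)) = a * (\<Sum>i<n. \<sigma> i * F t i)" for \<sigma> t
    by (simp add: sum_distrib_left algebra_simps)
  have "rademacher_sum n T (\<lambda>t i. a * F t i)
      = (\<Sum>\<sigma>\<in>sign_vectors n. SUP t\<in>T. a * (\<Sum>i<n. \<sigma> i * F t i))"
    unfolding rademacher_sum_def factor ..
  also have "\<dots> = (\<Sum>\<sigma>\<in>sign_vectors n. a * (SUP t\<in>T. \<Sum>i<n. \<sigma> i * F t i))"
    using SUP_mult_left_nonneg[OF assms(1,2) bounded_family_bdd_above(1)[OF assms(3)]] by simp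
  also have "\<dots> = a * rademacher_sum n T F"
    unfolding rademacher_sum_def by (rule sum_distrib_left[symmetric])
  finally show ?thesis .
qed

lemma rademacher_sum_uminus: "rademacher_sum n T (\<lambda>t i. - F t i) = rademacher_sum n T F"
proof -
  have "rademacher_sum n T F
      = (\<Sum>\<sigma>\<in>sign_vectors n. SUP t\<in>T. \<Sum>i<n. flip_signs {..<n} \<sigma> i * F t i)"
    unfolding rademacher_sum_def
    using sum.reindex_bij_betw[OF bij_betw_flip_signs[OF subset_refl],
        of "\<lambda>\<sigma>. SUP t\<in>T. \<Sum>i<n. \<sigma> i * F t i"]
    by simp
  also have "\<dots> = rademacher_sum n T (\<lambda>t i. - F t i)"
    unfolding rademacher_sum_def flip_signs_def by (intro sum.cong SUP_cong refl) simp
  finally show ?thesis ..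
qed

lemma SUP_add_SUP_diff_contraction:
  fixes p a :: "'t \<Rightarrow> real"
  assumes T: "T \<noteq> {}"
    and bdd: "bdd_above ((\<lambda>t. p t + a t) ` T)" "bdd_above ((\<lambda>t. p t - a t) ` T)"
    and lip: "\<And>x y. \<bar>\<phi> x - \<phi> y\<bar> \<le> \<bar>x - y\<bar>"
  shows "(SUP t\<in>T. p t + \<phi> (a t)) + (SUP t\<in>T. p t - \<phi> (a t))
    \<le> (SUP t\<in>T. p t + a t) + (SUP t\<in>T. p t - a t)"
proof -
  let ?R = "(SUP t\<in>T. p t + a t) + (SUP t\<in>T. p t - a t)"
  have pair: "(p t + \<phi> (a t)) + (p s - \<phi> (a s)) \<le> ?R" if "t \<in> T" "s \<in> T" for t s
    using cSUP_upper[OF that(1) bdd(1)] cSUP_upper[OF that(2) bdd(1)]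
      cSUP_upper[OF that(1) bdd(2)] cSUP_upper[OF that(2) bdd(2)] lip[of "a t" "a s"]
    by linarith
  have first: "(SUP t\<in>T. p t + \<phi> (a t)) \<le> ?R - (p s - \<phi> (a s))" if "s \<in> T" for s
  proof (rule cSUP_least[OF T])
    fix t assume "t \<in> T"
    from pair[OF this that] show "p t + \<phi> (a t) \<le> ?R - (p s - \<phi> (a s))" by linarith
  qed
  have "(SUP s\<in>T. p s - \<phi> (a s)) \<le> ?R - (SUP t\<in>T. p t + \<phi> (a t))"
  proof (rule cSUP_least[OF T])
    fix s assume "s \<in> T"
    from first[OF this] show "p s - \<phi> (a s) \<le> ?R - (SUP t\<in>T. p t + \<phi> (a t))" by linarith
  qed
  then show ?thesis by linarith
qed

(* With e = \<sigma> m, the substitution a t = e * F t m and \<psi> x = e * \<phi> (e * x) brings the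
   sign vectors \<sigma> and flip_signs {m} \<sigma> into the shape of SUP_add_SUP_diff_contraction. *)

lemma SUP_sum_flip_signs_contraction:
  fixes F :: "'t \<Rightarrow> nat \<Rightarrow> real"
  assumes T: "T \<noteq> {}" and F: "bounded_family n T F" and m: "m < n" and \<sigma>: "\<sigma> \<in> sign_vectors n"
    and lip: "\<And>x y. \<bar>\<phi> x - \<phi> y\<bar> \<le> \<bar>x - y\<bar>"
  defines "G \<equiv> \<lambda>t i. if i = m then \<phi> (F t i) else F t i"
  shows "(SUP t\<in>T. \<Sum>i<n. \<sigma> i * G t i) + (SUP t\<in>T. \<Sum>i<n. flip_signs {m} \<sigma> i * G t i)
    \<le> (SUP t\<in>T. \<Sum>i<n. \<sigma> i * F t i) + (SUP t\<in>T. \<Sum>i<n. flip_signs {m} \<sigma> i * F t i)"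
proof -
  define \<epsilon> where "\<epsilon> = \<sigma> m"
  have \<epsilon>: "\<epsilon> * \<epsilon> = 1" "\<bar>\<epsilon>\<bar> = 1"
    unfolding \<epsilon>_def using sign_vector_cases[OF \<sigma> m] by (elim disjE, simp_all)+
  define u where "u t = (\<Sum>i\<in>{..<n} - {m}. \<sigma> i * F t i)" for t
  have mem: "m \<in> {..<n}" using m by simp
  have coord: "(\<Sum>i<n. \<tau> i * H t i) = u t + \<tau> m * H t m"
    if "\<And>i. i \<noteq> m \<Longrightarrow> \<tau> i = \<sigma> i" "\<And>i. i \<noteq> m \<Longrightarrow> H t i = F t i" for \<tau> H t
  proof -
    have "(\<Sum>i\<in>{..<n} - {m}. \<tau> i * H t i) = u t"
      unfolding u_def using that by (intro sum.cong) auto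
    then show ?thesis by (simp add: sum.remove[OF finite_lessThan mem])
  qed
  have flip_m: "flip_signs {m} \<sigma> m = - \<epsilon>" "\<And>i. i \<noteq> m \<Longrightarrow> flip_signs {m} \<sigma> i = \<sigma> i"
    by (simp_all add: flip_signs_def \<epsilon>_def)
  have G_m: "G t m = \<phi> (F t m)" "\<And>i. i \<noteq> m \<Longrightarrow> G t i = F t i" for t
    by (simp_all add: G_def)
  define \<psi> where "\<psi> x = \<epsilon> * \<phi> (\<epsilon> * x)" for x
  define a where "a t = \<epsilon> * F t m" for t
  have \<psi>_a: "\<psi> (a t) = \<epsilon> * \<phi> (F t m)" for t
    by (simp add: \<psi>_def a_def mult.assoc[symmetric] \<epsilon>(1))
  have lip_\<psi>: "\<bar>\<psi> x - \<psi> y\<bar> \<le> \<bar>x - y\<bar>" for x y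
    using lip[of "\<epsilon> * x" "\<epsilon> * y"] by (simp add: \<psi>_def \<epsilon>(2) abs_mult flip: right_diff_distrib)
  have "(SUP t\<in>T. \<Sum>i<n. \<sigma> i * G t i) = (SUP t\<in>T. u t + \<psi> (a t))"
    "(SUP t\<in>T. \<Sum>i<n. flip_signs {m} \<sigma> i * G t i) = (SUP t\<in>T. u t - \<psi> (a t))"
    unfolding \<psi>_a by (simp_all add: coord[of \<sigma> G] coord[of "flip_signs {m} \<sigma>" G] G_m flip_m \<epsilon>_def)
  moreover have F_\<sigma>: "(\<lambda>t. \<Sum>i<n. \<sigma> i * F t i) = (\<lambda>t. u t + a t)"
    "(\<lambda>t. \<Sum>i<n. flip_signs {m} \<sigma> i * F t i) = (\<lambda>t. u t - a t)"
    by (simp_all add: fun_eq_iff coord[of \<sigma> F] coord[of "flip_signs {m} \<sigma>" F] flip_m a_def \<epsilon>_def)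
  moreover have "bdd_above ((\<lambda>t. u t + a t) ` T)" "bdd_above ((\<lambda>t. u t - a t) ` T)"
    using bounded_family_bdd_above(1)[OF F, of \<sigma>]
      bounded_family_bdd_above(1)[OF F, of "flip_signs {m} \<sigma>"]
    by (simp_all only: F_\<sigma>)
  ultimately show ?thesis
    using SUP_add_SUP_diff_contraction[OF T _ _ lip_\<psi>] by (simp only: F_\<sigma>)
qed

lemma rademacher_sum_contraction_coordinate:
  fixes F :: "'t \<Rightarrow> nat \<Rightarrow> real"
  assumes T: "T \<noteq> {}" and F: "bounded_family n T F" and m: "m < n"
    and lip: "\<And>x y. \<bar>\<phi> x - \<phi> y\<bar> \<le> \<bar>x - y\<bar>"
  shows "rademacher_sum n T (\<lambda>t i. if i = m then \<phi> (F t i) else F t i) \<le> rademacher_sum n T F"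
proof -
  have bij: "bij_betw (flip_signs {m}) (sign_vectors n) (sign_vectors n)"
    using m by (intro bij_betw_flip_signs) simp
  have paired: "2 * rademacher_sum n T H = (\<Sum>\<sigma>\<in>sign_vectors n.
      (SUP t\<in>T. \<Sum>i<n. \<sigma> i * H t i) + (SUP t\<in>T. \<Sum>i<n. flip_signs {m} \<sigma> i * H t i))" for H
    using sum.reindex_bij_betw[OF bij, of "\<lambda>\<sigma>. SUP t\<in>T. \<Sum>i<n. \<sigma> i * H t i"]
    by (simp add: rademacher_sum_def sum.distrib)
  have "2 * rademacher_sum n T (\<lambda>t i. if i = m then \<phi> (F t i) else F t i)
      \<le> 2 * rademacher_sum n T F"
    unfolding paired by (intro sum_mono SUP_sum_flip_signs_contraction[OF T F m _ lip])
  then show ?thesis by simp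
qed

lemma rademacher_sum_contraction:
  assumes T: "T \<noteq> {}" and F: "bounded_family n T F"
    and lip: "\<And>x y. \<bar>\<phi> x - \<phi> y\<bar> \<le> \<bar>x - y\<bar>"
  shows "rademacher_sum n T (\<lambda>t i. \<phi> (F t i)) \<le> rademacher_sum n T F"
proof -
  define G where "G k t i = (if i < k then \<phi> (F t i) else F t i)" for k t i
  obtain M where M: "\<And>t i. t \<in> T \<Longrightarrow> i < n \<Longrightarrow> \<bar>F t i\<bar> \<le> M"
    using F by (rule bounded_familyE) blast
  obtain M' where M': "\<And>t i. t \<in> T \<Longrightarrow> i < n \<Longrightarrow> \<bar>\<phi> (F t i)\<bar> \<le> M'"
    using bounded_family_comp[OF F lip] by (rule bounded_familyE) blast
  have G: "bounded_family n T (G k)" for k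
    by (rule bounded_familyI[where M = "max M M'"]) (simp add: G_def M M' le_max_iff_disj)
  have "rademacher_sum n T (G k) \<le> rademacher_sum n T F" if "k \<le> n" for k
    using that
  proof (induction k)
    case 0
    then show ?case by (simp add: G_def[abs_def])
  next
    case (Suc k)
    have "G (Suc k) = (\<lambda>t i. if i = k then \<phi> (G k t i) else G k t i)"
      by (auto simp: G_def fun_eq_iff)
    then have "rademacher_sum n T (G (Suc k)) \<le> rademacher_sum n T (G k)"
      using rademacher_sum_contraction_coordinate[OF T G, of k \<phi>] Suc.prems lip by simp
    also have "\<dots> \<le> rademacher_sum n T F"
      using Suc by simp
    finally show ?case .
  qed
  moreover have "rademacher_sum n T (\<lambda>t i. \<phi> (F t i)) = rademacher_sum n T (G n)"
    by (rule rademacher_sum_cong) (simp add: G_def)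
  ultimately show ?thesis by simp
qed

lemma rademacher_sum_max:
  assumes T: "T \<noteq> {}" and A: "bounded_family n T A" and B: "bounded_family n T B"
  shows "rademacher_sum n T (\<lambda>t i. max (A t i) (B t i))
    \<le> rademacher_sum n T A + rademacher_sum n T B"
proof -
  have lip_abs: "\<bar>\<bar>x\<bar> - \<bar>y\<bar>\<bar> \<le> \<bar>x - y\<bar>" for x y :: real
    by (rule abs_triangle_ineq3)
  have lip_uminus: "\<bar>- x - - y\<bar> \<le> \<bar>x - y\<bar>" for x y :: real
    by simp
  have negB: "bounded_family n T (\<lambda>t i. - B t i)"
    using bounded_family_comp[OF B lip_uminus] .
  have "bounded_family n T (\<lambda>t i. A t i + - B t i)"
    by (rule bounded_family_add[OF A negB])
  then have diff: "bounded_family n T (\<lambda>t i. A t i - B t i)"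
    by simp
  have sum: "bounded_family n T (\<lambda>t i. A t i + B t i)"
    by (rule bounded_family_add[OF A B])
  have abs_diff: "bounded_family n T (\<lambda>t i. \<bar>A t i - B t i\<bar>)"
    using bounded_family_comp[OF diff lip_abs] .
  have "rademacher_sum n T (\<lambda>t i. max (A t i) (B t i))
      = rademacher_sum n T (\<lambda>t i. 1 / 2 * ((A t i + B t i) + \<bar>A t i - B t i\<bar>))"
    by (rule rademacher_sum_cong) (simp add: max_def)
  also have "\<dots> = 1 / 2 * rademacher_sum n T (\<lambda>t i. (A t i + B t i) + \<bar>A t i - B t i\<bar>)"
    by (rule rademacher_sum_scale[OF _ T bounded_family_add[OF sum abs_diff]]) simp
  also have "\<dots> \<le> 1 / 2 * (rademacher_sum n T (\<lambda>t i. A t i + B t i)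
      + rademacher_sum n T (\<lambda>t i. \<bar>A t i - B t i\<bar>))"
    using rademacher_sum_add[OF T sum abs_diff] by simp
  also have "\<dots> \<le> 1 / 2 * ((rademacher_sum n T A + rademacher_sum n T B)
      + rademacher_sum n T (\<lambda>t i. A t i - B t i))"
    using rademacher_sum_add[OF T A B] rademacher_sum_contraction[OF T diff lip_abs] by simp
  also have "\<dots> \<le> rademacher_sum n T A + rademacher_sum n T B"
    using rademacher_sum_add[OF T A negB] rademacher_sum_uminus[of n T B] by simp
  finally show ?thesis .
qed

lemma rademacher_sum_Max:
  assumes Y: "finite Y" "Y \<noteq> {}" and T: "T \<noteq> {}"
    and M: "\<And>t i y. t \<in> T \<Longrightarrow> i < n \<Longrightarrow> y \<in> Y \<Longrightarrow> \<bar>F t i y\<bar> \<le> M"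
  shows "rademacher_sum n T (\<lambda>t i. Max (F t i ` Y)) \<le> (\<Sum>y\<in>Y. rademacher_sum n T (\<lambda>t i. F t i y))"
  using Y M
proof (induction Y rule: finite_ne_induct)
  case (singleton y)
  then show ?case by simp
next
  case (insert y Y)
  have Max: "bounded_family n T (\<lambda>t i. Max (F t i ` Y))"
  proof (rule bounded_familyI[where M = M])
    fix t i assume "t \<in> T" "i < n"
    moreover have "Max (F t i ` Y) \<in> F t i ` Y"
      using insert.hyps(1,2) by (intro Max_in) auto
    ultimately show "\<bar>Max (F t i ` Y)\<bar> \<le> M"
      using insert.prems by auto
  qed
  have y: "bounded_family n T (\<lambda>t i. F t i y)"
    by (rule bounded_familyI[where M = M]) (simp add: insert.prems)
  have "rademacher_sum n T (\<lambda>t i. Max (F t i ` insert y Y))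
      = rademacher_sum n T (\<lambda>t i. max (F t i y) (Max (F t i ` Y)))"
    using insert.hyps(1,2) by (intro rademacher_sum_cong) simp
  also have "\<dots> \<le> rademacher_sum n T (\<lambda>t i. F t i y) + rademacher_sum n T (\<lambda>t i. Max (F t i ` Y))"
    by (rule rademacher_sum_max[OF T y Max])
  also have "\<dots> \<le> (\<Sum>y\<in>insert y Y. rademacher_sum n T (\<lambda>t i. F t i y))"
    using insert by simp
  finally show ?case .
qed

lemma rademacher_sum_le_abs_rademacher_sum:
  assumes "T \<noteq> {}" "bounded_family n T F"
  shows "rademacher_sum n T F \<le> abs_rademacher_sum n T F"
  unfolding rademacher_sum_def abs_rademacher_sum_def
  by (intro sum_mono cSUP_mono[OF assms(1) bounded_family_bdd_above(2)[OF assms(2)]])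
    (use abs_ge_self in blast)

lemma abs_rademacher_sum_diff:
  assumes T: "T \<noteq> {}" and "bounded_family n T F" "bounded_family n T G"
  shows "abs_rademacher_sum n T (\<lambda>t i. F t i - G t i)
    \<le> abs_rademacher_sum n T F + abs_rademacher_sum n T G"
  unfolding abs_rademacher_sum_def sum.distrib[symmetric]
proof (intro sum_mono cSUP_least[OF T])
  fix \<sigma> :: "nat \<Rightarrow> real" and t assume "t \<in> T"
  have "\<bar>\<Sum>i<n. \<sigma> i * (F t i - G t i)\<bar> \<le> \<bar>\<Sum>i<n. \<sigma> i * F t i\<bar> + \<bar>\<Sum>i<n. \<sigma> i * G t i\<bar>"
    unfolding right_diff_distrib sum_subtractf by (rule abs_triangle_ineq4)
  also have "\<dots> \<le> (SUP t\<in>T. \<bar>\<Sum>i<n. \<sigma> i * F t i\<bar>) + (SUP t\<in>T. \<bar>\<Sum>i<n. \<sigma> i * G t i\<bar>)"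
    by (intro add_mono cSUP_upper \<open>t \<in> T\<close> bounded_family_bdd_above(2) assms(2,3))
  finally show "\<bar>\<Sum>i<n. \<sigma> i * (F t i - G t i)\<bar> \<le> \<dots>" .
qed

lemma abs_rademacher_sum_le:
  assumes t0: "t0 \<in> T" and F: "bounded_family n T F"
  shows "abs_rademacher_sum n T F
    \<le> 2 * rademacher_sum n T F + (\<Sum>\<sigma>\<in>sign_vectors n. \<bar>\<Sum>i<n. \<sigma> i * F t0 i\<bar>)"
proof -
  have T: "T \<noteq> {}" using t0 by blast
  have negF: "bounded_family n T (\<lambda>t i. - F t i)"
    by (rule bounded_family_comp[OF F]) simp
  have "(SUP t\<in>T. \<bar>\<Sum>i<n. \<sigma> i * F t i\<bar>)
      \<le> (SUP t\<in>T. \<Sum>i<n. \<sigma> i * F t i) + (SUP t\<in>T. \<Sum>i<n. \<sigma> i * - F t i)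
        + \<bar>\<Sum>i<n. \<sigma> i * F t0 i\<bar>" for \<sigma>
  proof (rule cSUP_least[OF T])
    fix t assume "t \<in> T"
    have neg: "(\<Sum>i<n. \<sigma> i * - F s i) = - (\<Sum>i<n. \<sigma> i * F s i)" for s
      by (simp add: sum_negf)
    show "\<bar>\<Sum>i<n. \<sigma> i * F t i\<bar> \<le> (SUP t\<in>T. \<Sum>i<n. \<sigma> i * F t i)
        + (SUP t\<in>T. \<Sum>i<n. \<sigma> i * - F t i) + \<bar>\<Sum>i<n. \<sigma> i * F t0 i\<bar>"
      using cSUP_upper[OF \<open>t \<in> T\<close> bounded_family_bdd_above(1)[OF F, of \<sigma>]]
        cSUP_upper[OF \<open>t \<in> T\<close> bounded_family_bdd_above(1)[OF negF, of \<sigma>]]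
        cSUP_upper[OF t0 bounded_family_bdd_above(1)[OF F, of \<sigma>]]
        cSUP_upper[OF t0 bounded_family_bdd_above(1)[OF negF, of \<sigma>]]
        neg[of t] neg[of t0]
      by linarith
  qed
  then have "abs_rademacher_sum n T F \<le> rademacher_sum n T F + rademacher_sum n T (\<lambda>t i. - F t i)
      + (\<Sum>\<sigma>\<in>sign_vectors n. \<bar>\<Sum>i<n. \<sigma> i * F t0 i\<bar>)"
    unfolding abs_rademacher_sum_def rademacher_sum_def sum.distrib[symmetric] by (rule sum_mono)
  then show ?thesis
    by (simp add: rademacher_sum_uminus)
qed

section \<open>Positive semidefinite bilinear forms\<close>

definition pos_semidef_on :: "nat set \<Rightarrow> (nat \<Rightarrow> nat \<Rightarrow> real) \<Rightarrow> bool" where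
  "pos_semidef_on A K \<longleftrightarrow> (\<forall>i\<in>A. \<forall>j\<in>A. K i j = K j i) \<and> (\<forall>w. 0 \<le> bilinear_form A K w w)"

lemma quadratic_nonneg_imp_discriminant_le:
  fixes a b c :: real
  assumes "0 \<le> c" and nonneg: "\<And>t. 0 \<le> a + 2 * b * t + c * t\<^sup>2"
  shows "b\<^sup>2 \<le> a * c"
proof (cases "c = 0")
  case True
  have "b = 0"
  proof (rule ccontr)
    assume "b \<noteq> 0"
    then have "a + 2 * b * (- (a + 1) / (2 * b)) + c * (- (a + 1) / (2 * b))\<^sup>2 = -1"
      using True by (simp add: field_simps)
    with nonneg show False by (metis neg_0_le_iff_le not_one_le_zero)
  qed
  with True show ?thesis by simp
next
  case False
  with assms(1) have c: "0 < c" by simp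
  have "0 \<le> a + 2 * b * (- b / c) + c * (- b / c)\<^sup>2" by (rule nonneg)
  also have "\<dots> = a - b\<^sup>2 / c" using c by (simp add: field_simps power2_eq_square)
  finally show ?thesis using c by (simp add: field_simps)
qed

lemma bilinear_form_swap:
  assumes "\<And>i j. i \<in> A \<Longrightarrow> j \<in> A \<Longrightarrow> K i j = K j i"
  shows "bilinear_form A K v u = bilinear_form A K u v"
  unfolding bilinear_form_def
  by (subst sum.swap) (simp add: assms mult.commute mult.left_commute)

lemma bilinear_form_Cauchy_Schwarz:
  assumes K: "pos_semidef_on A K"
  shows "\<bar>bilinear_form A K u v\<bar> \<le> sqrt (bilinear_form A K u u) * sqrt (bilinear_form A K v v)"
proof -
  have sym: "bilinear_form A K v u = bilinear_form A K u v"
    using K unfolding pos_semidef_on_def by (intro bilinear_form_swap) blast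
  have "0 \<le> bilinear_form A K u u + 2 * bilinear_form A K u v * t + bilinear_form A K v v * t\<^sup>2"
    for t
  proof -
    have "0 \<le> bilinear_form A K (\<lambda>i. u i + t * v i) (\<lambda>i. u i + t * v i)"
      using K unfolding pos_semidef_on_def by blast
    also have "\<dots> = bilinear_form A K u u + t * bilinear_form A K u v + t * bilinear_form A K v u
        + t\<^sup>2 * bilinear_form A K v v"
      unfolding bilinear_form_def
      by (simp add: algebra_simps sum.distrib sum_distrib_left power2_eq_square)
    finally show ?thesis by (simp add: sym algebra_simps)
  qed
  moreover have "0 \<le> bilinear_form A K v v"
    using K unfolding pos_semidef_on_def by blast
  ultimately have "(bilinear_form A K u v)\<^sup>2 \<le> bilinear_form A K u u * bilinear_form A K v v"
    by (intro quadratic_nonneg_imp_discriminant_le)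
  then show ?thesis
    by (metis real_sqrt_abs real_sqrt_le_mono real_sqrt_mult)
qed

lemma bilinear_form_indicator_left:
  assumes "finite A" "J \<subseteq> A"
  shows "bilinear_form A K (\<lambda>i. if i \<in> J then u i else 0) v = (\<Sum>i\<in>J. u i * (\<Sum>j\<in>A. v j * K i j))"
proof -
  have "bilinear_form A K (\<lambda>i. if i \<in> J then u i else 0) v
      = (\<Sum>i\<in>A. if i \<in> J then u i * (\<Sum>j\<in>A. v j * K i j) else 0)"
    unfolding bilinear_form_def by (intro sum.cong refl) (simp add: sum_distrib_left algebra_simps)
  also have "\<dots> = (\<Sum>i\<in>J. u i * (\<Sum>j\<in>A. v j * K i j))"
    using assms by (simp add: sum.If_cases Int_absorb1)
  finally show ?thesis .
qed

lemma bilinear_form_indicator: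
  assumes "finite A" "J \<subseteq> A"
  shows "bilinear_form A K (\<lambda>i. if i \<in> J then u i else 0) (\<lambda>i. if i \<in> J then u i else 0)
    = bilinear_form J K u u"
proof -
  have "(\<Sum>j\<in>A. (if j \<in> J then u j else 0) * K i j) = (\<Sum>j\<in>A. if j \<in> J then u j * K i j else 0)"
    for i by (intro sum.cong) auto
  also have "\<dots> i = (\<Sum>j\<in>J. u j * K i j)" for i
    using assms by (simp add: sum.If_cases Int_absorb1)
  finally have "(\<Sum>j\<in>A. (if j \<in> J then u j else 0) * K i j) = (\<Sum>j\<in>J. u j * K i j)" for i .
  then show ?thesis
    using assms unfolding bilinear_form_indicator_left[OF assms]
    by (simp add: bilinear_form_def sum_distrib_left algebra_simps)
qed

lemma pos_semidef_on_subset: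
  assumes "pos_semidef_on A K" "finite A" "J \<subseteq> A"
  shows "pos_semidef_on J K"
  using assms bilinear_form_indicator[OF assms(2,3), of K]
  unfolding pos_semidef_on_def by (metis subsetD)

lemma has_sum_sum:
  fixes f :: "'i \<Rightarrow> 'a \<Rightarrow> 'b::topological_comm_monoid_add"
  assumes "finite I" "\<And>i. i \<in> I \<Longrightarrow> (f i has_sum s i) A"
  shows "((\<lambda>x. \<Sum>i\<in>I. f i x) has_sum (\<Sum>i\<in>I. s i)) A"
  using assms by (induction I rule: finite_induct) (auto intro!: has_sum_add)

lemma summable_on_weighted_product:
  fixes w a b :: "'k \<Rightarrow> real"
  assumes "(\<lambda>k. \<bar>w k\<bar> * (a k)\<^sup>2) summable_on I" "(\<lambda>k. \<bar>w k\<bar> * (b k)\<^sup>2) summable_on I"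
  shows "(\<lambda>k. w k * a k * b k) summable_on I"
proof -
  have "(\<lambda>k. norm (\<bar>w k\<bar> * (a k)\<^sup>2 + \<bar>w k\<bar> * (b k)\<^sup>2)) summable_on I"
    using summable_on_add[OF assms] by (rule summable_on_iff_abs_summable_on_real[THEN iffD1])
  then have "(\<lambda>k. norm (w k * a k * b k)) summable_on I"
  proof (rule Infinite_Sum.abs_summable_on_comparison_test)
    fix k
    have "2 * (\<bar>a k\<bar> * \<bar>b k\<bar>) \<le> (a k)\<^sup>2 + (b k)\<^sup>2"
      using sum_squares_bound[of "\<bar>a k\<bar>" "\<bar>b k\<bar>"] by simp
    moreover have "0 \<le> \<bar>a k\<bar> * \<bar>b k\<bar>" by simp
    ultimately have "\<bar>a k\<bar> * \<bar>b k\<bar> \<le> (a k)\<^sup>2 + (b k)\<^sup>2" by linarith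
    then have "\<bar>w k\<bar> * (\<bar>a k\<bar> * \<bar>b k\<bar>) \<le> \<bar>w k\<bar> * ((a k)\<^sup>2 + (b k)\<^sup>2)"
      by (rule mult_left_mono) simp
    then show "norm (w k * a k * b k) \<le> norm (\<bar>w k\<bar> * (a k)\<^sup>2 + \<bar>w k\<bar> * (b k)\<^sup>2)"
      by (simp add: abs_mult algebra_simps)
  qed
  then show ?thesis by (rule summable_on_iff_abs_summable_on_real[THEN iffD2])
qed

lemma pos_semidef_on_infsum_rank_one:
  fixes f :: "'k \<Rightarrow> real" and g :: "'k \<Rightarrow> nat \<Rightarrow> real"
  assumes A: "finite A"
    and summable: "\<And>i j. i \<in> A \<Longrightarrow> j \<in> A \<Longrightarrow> (\<lambda>k. f k * g k i * g k j) summable_on \<Lambda>"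
    and nonneg: "\<And>k. k \<in> \<Lambda> \<Longrightarrow> 0 \<le> f k"
  shows "pos_semidef_on A (\<lambda>i j. \<Sum>\<^sub>\<infinity>k\<in>\<Lambda>. f k * g k i * g k j)"
  unfolding pos_semidef_on_def
proof (intro conjI ballI allI)
  fix i j show "(\<Sum>\<^sub>\<infinity>k\<in>\<Lambda>. f k * g k i * g k j) = (\<Sum>\<^sub>\<infinity>k\<in>\<Lambda>. f k * g k j * g k i)"
    by (simp add: mult.commute mult.left_commute)
next
  fix w
  have entry: "((\<lambda>k. f k * g k i * g k j) has_sum (\<Sum>\<^sub>\<infinity>k\<in>\<Lambda>. f k * g k i * g k j)) \<Lambda>"
    if "i \<in> A" "j \<in> A" for i j
    using summable[OF that] by (rule has_sum_infsum)
  have sum: "((\<lambda>k. \<Sum>i\<in>A. \<Sum>j\<in>A. w i * w j * (f k * g k i * g k j))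
      has_sum bilinear_form A (\<lambda>i j. \<Sum>\<^sub>\<infinity>k\<in>\<Lambda>. f k * g k i * g k j) w w) \<Lambda>"
    unfolding bilinear_form_def using A by (intro has_sum_sum has_sum_cmult_right entry)
  have square: "(\<Sum>i\<in>A. \<Sum>j\<in>A. w i * w j * (f k * g k i * g k j)) = f k * (\<Sum>i\<in>A. w i * g k i)\<^sup>2"
    for k
  proof -
    have "f k * (\<Sum>i\<in>A. w i * g k i)\<^sup>2 = (\<Sum>i\<in>A. \<Sum>j\<in>A. f k * (w i * g k i * (w j * g k j)))"
      by (simp only: power2_eq_square sum_product) (simp only: sum_distrib_left)
    then show ?thesis by (simp add: mult_ac)
  qed
  show "0 \<le> bilinear_form A (\<lambda>i j. \<Sum>\<^sub>\<infinity>k\<in>\<Lambda>. f k * g k i * g k j) w w"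
    by (rule has_sum_nonneg[OF sum]) (simp add: square nonneg)
qed

lemma abs_bilinear_form_indicator_le:
  assumes K: "pos_semidef_on A K" and A: "finite A" "J \<subseteq> A"
    and a: "bilinear_form A K a a \<le> B\<^sup>2" and B: "0 \<le> B"
  shows "\<bar>bilinear_form A K (\<lambda>i. if i \<in> J then b i else 0) a\<bar> \<le> B * sqrt (bilinear_form J K b b)"
proof -
  let ?u = "\<lambda>i. if i \<in> J then b i else 0"
  have "\<bar>bilinear_form A K ?u a\<bar> \<le> sqrt (bilinear_form A K ?u ?u) * sqrt (bilinear_form A K a a)"
    by (rule bilinear_form_Cauchy_Schwarz[OF K])
  also have "\<dots> \<le> sqrt (bilinear_form J K b b) * B"
  proof (rule mult_mono)
    show "sqrt (bilinear_form A K ?u ?u) \<le> sqrt (bilinear_form J K b b)"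
      by (simp add: bilinear_form_indicator[OF A])
    show "sqrt (bilinear_form A K a a) \<le> B"
      using B a by (rule real_le_lsqrt)
    show "0 \<le> sqrt (bilinear_form J K b b)"
      using pos_semidef_on_subset[OF K A] unfolding pos_semidef_on_def by simp
  qed (use K in \<open>simp add: pos_semidef_on_def\<close>)
  finally show ?thesis by (simp add: mult.commute)
qed

section \<open>Label classes and runner-up scores\<close>

lemma sum_sqrt_card_fibers_le:
  assumes "finite Y" "\<And>i. i < n \<Longrightarrow> s i \<in> Y"
  shows "(\<Sum>y\<in>Y. sqrt (real (card {i. i < n \<and> s i = y}))) \<le> sqrt (real (card Y) * real n)"
proof -
  have "(\<Sum>y\<in>Y. real (card {i. i < n \<and> s i = y})) = (\<Sum>y\<in>Y. \<Sum>i\<in>{i \<in> {..<n}. s i = y}. 1)"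
    by simp
  also have "\<dots> = real n"
    using assms by (subst sum.group) auto
  finally show ?thesis
    using sum_sqrt_le_sqrt_card_mult_sum[of Y "\<lambda>y. real (card {i. i < n \<and> s i = y})"] by simp
qed

(* Enumerates {1..c} - {y} by the fixed index set {1..c - 1}, so that the runner-up score
   becomes a maximum of c - 1 score families. *)
definition other_label :: "nat \<Rightarrow> nat \<Rightarrow> nat" where
  "other_label y j = (if j < y then j else Suc j)"

lemma other_label_image:
  assumes "y \<in> {1..c}"
  shows "other_label y ` {1..c - 1} = {1..c} - {y}"
proof
  show "other_label y ` {1..c - 1} \<subseteq> {1..c} - {y}"
    using assms by (auto simp: other_label_def)
  show "{1..c} - {y} \<subseteq> other_label y ` {1..c - 1}"
  proof
    fix y' assume y': "y' \<in> {1..c} - {y}"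
    show "y' \<in> other_label y ` {1..c - 1}"
    proof (cases "y' < y")
      case True
      with y' assms show ?thesis by (intro image_eqI[of _ _ y']) (auto simp: other_label_def)
    next
      case False
      with y' assms show ?thesis by (intro image_eqI[of _ _ "y' - 1"]) (auto simp: other_label_def)
    qed
  qed
qed

definition runner_up :: "nat \<Rightarrow> ('a \<Rightarrow> nat \<Rightarrow> real) \<Rightarrow> 'a \<Rightarrow> nat \<Rightarrow> real" where
  "runner_up c h x y = Max {h x y' | y'. y' \<in> {1..c} \<and> y' \<noteq> y}"

lemma margin_eq_runner_up: "margin c h x y = h x y - runner_up c h x y"
  by (simp add: margin_def runner_up_def)

lemma runner_up_eq_Max_other_label:
  assumes "y \<in> {1..c}"
  shows "runner_up c h x y = Max ((\<lambda>j. h x (other_label y j)) ` {1..c - 1})"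
proof -
  have "runner_up c h x y = Max (h x ` ({1..c} - {y}))"
    unfolding runner_up_def by (rule arg_cong[where f = Max]) auto
  also have "\<dots> = Max (h x ` other_label y ` {1..c - 1})"
    by (simp only: other_label_image[OF assms])
  finally show ?thesis
    by (simp only: image_image)
qed

lemma margin_constant_le:
  fixes c :: real
  assumes "2 \<le> c"
  shows "(2 * c - 1) * sqrt c + 1 \<le> c * (2 * c - 1)"
proof -
  have "2 * c \<le> c * c"
    using mult_right_mono[OF assms, of c] assms by simp
  moreover have "(c - 1 / 3)\<^sup>2 = c * c - 2 / 3 * c + 1 / 9"
    by (simp add: power2_eq_square algebra_simps)
  ultimately have "c \<le> (c - 1 / 3)\<^sup>2"
    using assms by linarith
  then have "sqrt c \<le> c - 1 / 3"
    using assms by (intro real_le_lsqrt) simp_all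
  then have "(2 * c - 1) * sqrt c \<le> (2 * c - 1) * (c - 1 / 3)"
    using assms by (intro mult_left_mono) simp_all
  then show ?thesis
    using assms by (simp add: algebra_simps)
qed

lemma margin_rademacher_arith:
  fixes c n K :: real
  assumes c: "2 \<le> c" and n: "0 < n" and K: "0 \<le> K"
  shows "(K * sqrt (c * n) + 2 * ((c - 1) * (K * sqrt (c * n))) + K * sqrt n) / n
    \<le> K * (c * (2 * c - 1)) / sqrt n"
proof -
  define s where "s = sqrt n"
  have s: "0 < s" "n = s * s" "sqrt (c * n) = sqrt c * s"
    using n by (simp_all add: s_def real_sqrt_mult)
  have "(K * sqrt (c * n) + 2 * ((c - 1) * (K * sqrt (c * n))) + K * sqrt n) / n
      = K * ((2 * c - 1) * sqrt c + 1) / sqrt n"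
    unfolding s(3) s_def[symmetric] unfolding s(2) using s(1) by (simp add: field_simps)
  also have "\<dots> \<le> K * (c * (2 * c - 1)) / sqrt n"
    using margin_constant_le[OF c] K n by (intro divide_right_mono mult_left_mono) simp_all
  finally show ?thesis .
qed

section \<open>The kernel classes on a labelled sample\<close>

locale labeled_sample =
  fixes X :: "'a set" and S :: "'a \<Rightarrow> 'a \<Rightarrow> real" and lam :: "nat \<Rightarrow> real"
    and phi :: "nat \<Rightarrow> 'a \<Rightarrow> real" and I :: "nat set" and c n :: nat
    and D :: "nat \<Rightarrow> 'a \<times> nat" and Bp Bm R :: real
  assumes sample_in: "\<And>i. i < n \<Longrightarrow> fst (D i) \<in> X \<and> snd (D i) \<in> {1..c}"
    and expansion: "\<forall>x\<in>X. \<forall>t\<in>X. S x t = (\<Sum>\<^sub>\<infinity>k\<in>I. lam k * phi k x * phi k t)"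
    and square_summable: "\<forall>x\<in>X. (\<lambda>k. \<bar>lam k\<bar> * (phi k x)\<^sup>2) summable_on I"
    and diag_plus: "\<forall>x\<in>X. \<bar>Splus lam phi I x x\<bar> \<le> R\<^sup>2"
    and diag_minus: "\<forall>x\<in>X. \<bar>Sminus lam phi I x x\<bar> \<le> R\<^sup>2"
    and Bp: "0 \<le> Bp" and Bm: "0 \<le> Bm" and R: "0 \<le> R" and two_le_c: "2 \<le> c"
begin

abbreviation point :: "nat \<Rightarrow> 'a" where "point i \<equiv> fst (D i)"

abbreviation label :: "nat \<Rightarrow> nat" where "label i \<equiv> snd (D i)"

definition Kplus :: "nat \<Rightarrow> nat \<Rightarrow> real" where
  "Kplus = (\<lambda>i j. Splus lam phi I (point i) (point j))"

definition Kminus :: "nat \<Rightarrow> nat \<Rightarrow> real" where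
  "Kminus = (\<lambda>i j. Sminus lam phi I (point i) (point j))"

definition class_coeffs :: "(nat \<Rightarrow> real) \<Rightarrow> nat \<Rightarrow> nat \<Rightarrow> real" where
  "class_coeffs \<alpha> y j = (if label j = y then \<alpha> j else 0)"

definition class_bound :: "(nat \<Rightarrow> real) \<Rightarrow> nat set \<Rightarrow> real" where
  "class_bound b J = Bp * sqrt (bilinear_form J Kplus b b) + Bm * sqrt (bilinear_form J Kminus b b)"

lemma point_in: "i < n \<Longrightarrow> point i \<in> X"
  and label_in: "i < n \<Longrightarrow> label i \<in> {1..c}"
  using sample_in by blast+

lemma summable_on_pair:
  assumes "i < n" "j < n"
  shows "(\<lambda>k. lam k * phi k (point i) * phi k (point j)) summable_on I"
    and "(\<lambda>k. \<bar>lam k\<bar> * phi k (point i) * phi k (point j)) summable_on I"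
  using square_summable point_in[OF assms(1)] point_in[OF assms(2)]
  by (auto intro!: summable_on_weighted_product)

lemma pos_semidef_Kplus: "pos_semidef_on {..<n} Kplus"
  unfolding Kplus_def Splus_def
  by (rule pos_semidef_on_infsum_rank_one[where f = lam and g = "\<lambda>k i. phi k (point i)"])
    (auto intro: summable_on_subset_banach[OF summable_on_pair(1)])

lemma pos_semidef_Kminus: "pos_semidef_on {..<n} Kminus"
  unfolding Kminus_def Sminus_def
  by (rule pos_semidef_on_infsum_rank_one[where f = "\<lambda>k. \<bar>lam k\<bar>" and g = "\<lambda>k i. phi k (point i)"])
    (auto intro: summable_on_subset_banach[OF summable_on_pair(2)])

lemma kernel_eq_Kplus_minus_Kminus:
  assumes "i < n" "j < n"
  shows "S (point i) (point j) = Kplus i j - Kminus i j"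
proof -
  let ?f = "\<lambda>k. lam k * phi k (point i) * phi k (point j)"
  have "{k \<in> I. 0 \<le> lam k} \<union> {k \<in> I. lam k < 0} = I" "{k \<in> I. 0 \<le> lam k} \<inter> {k \<in> I. lam k < 0} = {}"
    by auto
  then have "(\<Sum>\<^sub>\<infinity>k\<in>I. ?f k) = (\<Sum>\<^sub>\<infinity>k\<in>{k \<in> I. 0 \<le> lam k}. ?f k) + (\<Sum>\<^sub>\<infinity>k\<in>{k \<in> I. lam k < 0}. ?f k)"
    using summable_on_subset_banach[OF summable_on_pair(1)[OF assms]]
    by (metis (no_types, lifting) infsum_Un_disjoint mem_Collect_eq subsetI)
  moreover have "Kminus i j = (\<Sum>\<^sub>\<infinity>k\<in>{k \<in> I. lam k < 0}. - ?f k)"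
    unfolding Kminus_def Sminus_def by (intro infsum_cong) simp
  ultimately show ?thesis
    using expansion point_in[OF assms(1)] point_in[OF assms(2)]
    by (simp add: Kplus_def Splus_def infsum_uminus)
qed

lemma Omega_eq_sum_bilinear_form:
  "Omega K c n D \<alpha>
    = (\<Sum>y=1..c. bilinear_form {..<n} (\<lambda>i j. K (point i) (point j))
        (class_coeffs \<alpha> y) (class_coeffs \<alpha> y))"
  unfolding Omega_def bilinear_form_def class_coeffs_def
  by (intro sum.cong refl) (simp add: algebra_simps)

lemma bilinear_form_class_coeffs_le:
  assumes "pos_semidef_on {..<n} (\<lambda>i j. K (point i) (point j))" "y \<in> {1..c}"
  shows "bilinear_form {..<n} (\<lambda>i j. K (point i) (point j)) (class_coeffs \<alpha> y) (class_coeffs \<alpha> y)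
    \<le> Omega K c n D \<alpha>"
  unfolding Omega_eq_sum_bilinear_form
  using assms by (intro member_le_sum) (auto simp: pos_semidef_on_def)

lemma abs_sum_class_function_le:
  assumes y: "y \<in> {1..c}" and g: "g \<in> HSy S (Splus lam phi I) (Sminus lam phi I) Bp Bm c n D y"
    and J: "J \<subseteq> {..<n}"
  shows "\<bar>\<Sum>i\<in>J. b i * g (point i)\<bar> \<le> class_bound b J"
proof -
  obtain \<alpha> where g_eq: "g = (\<lambda>x. \<Sum>i\<in>{i. i < n \<and> label i = y}. \<alpha> i * S x (point i))"
    and Omega_plus: "Omega (Splus lam phi I) c n D \<alpha> \<le> Bp\<^sup>2"
    and Omega_minus: "Omega (Sminus lam phi I) c n D \<alpha> \<le> Bm\<^sup>2"
    using g unfolding HSy_def by blast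
  define a where "a = class_coeffs \<alpha> y"
  define u where "u i = (if i \<in> J then b i else 0)" for i
  have g_point: "g (point i) = (\<Sum>j<n. a j * Kplus i j) - (\<Sum>j<n. a j * Kminus i j)" if "i < n" for i
  proof -
    have "g (point i) = (\<Sum>j\<in>{j \<in> {..<n}. label j = y}. \<alpha> j * S (point i) (point j))"
      by (simp add: g_eq)
    also have "\<dots> = (\<Sum>j<n. if label j = y then \<alpha> j * S (point i) (point j) else 0)"
      by (rule sum.inter_filter) simp
    also have "\<dots> = (\<Sum>j<n. a j * (Kplus i j - Kminus i j))"
      using that
      by (intro sum.cong) (simp_all add: a_def class_coeffs_def kernel_eq_Kplus_minus_Kminus)
    finally show ?thesis by (simp add: right_diff_distrib sum_subtractf)
  qed
  have "(\<Sum>i\<in>J. b i * g (point i))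
      = bilinear_form {..<n} Kplus u a - bilinear_form {..<n} Kminus u a"
    using J unfolding u_def bilinear_form_indicator_left[OF finite_lessThan J]
    by (simp add: g_point subset_eq right_diff_distrib sum_subtractf)
  also have "\<bar>\<dots>\<bar> \<le> Bp * sqrt (bilinear_form J Kplus b b) + Bm * sqrt (bilinear_form J Kminus b b)"
  proof (rule order_trans[OF abs_triangle_ineq4 add_mono])
    show "\<bar>bilinear_form {..<n} Kplus u a\<bar> \<le> Bp * sqrt (bilinear_form J Kplus b b)"
      unfolding u_def using pos_semidef_Kplus J Omega_plus Bp
        bilinear_form_class_coeffs_le[OF pos_semidef_Kplus[unfolded Kplus_def] y, of \<alpha>]
      by (intro abs_bilinear_form_indicator_le) (simp_all add: a_def Kplus_def)
    show "\<bar>bilinear_form {..<n} Kminus u a\<bar> \<le> Bm * sqrt (bilinear_form J Kminus b b)"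
      unfolding u_def using pos_semidef_Kminus J Omega_minus Bm
        bilinear_form_class_coeffs_le[OF pos_semidef_Kminus[unfolded Kminus_def] y, of \<alpha>]
      by (intro abs_bilinear_form_indicator_le) (simp_all add: a_def Kminus_def)
  qed
  finally show ?thesis unfolding class_bound_def .
qed

lemma Kplus_Kminus_diag_le:
  assumes "i < n"
  shows "Kplus i i \<le> R\<^sup>2" "Kminus i i \<le> R\<^sup>2"
  using diag_plus diag_minus point_in[OF assms] by (auto simp: Kplus_def Kminus_def abs_le_iff)

lemma abs_class_function_le:
  assumes y: "y \<in> {1..c}" and g: "g \<in> HSy S (Splus lam phi I) (Sminus lam phi I) Bp Bm c n D y"
    and i: "i < n"
  shows "\<bar>g (point i)\<bar> \<le> R * (Bp + Bm)"
proof -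
  have "\<bar>g (point i)\<bar> \<le> class_bound (\<lambda>_. 1) {i}"
    using abs_sum_class_function_le[OF y g, of "{i}" "\<lambda>_. 1"] i by simp
  also have "\<dots> = Bp * sqrt (Kplus i i) + Bm * sqrt (Kminus i i)"
    by (simp add: class_bound_def bilinear_form_def)
  also have "\<dots> \<le> Bp * R + Bm * R"
    using Kplus_Kminus_diag_le[OF i] Bp Bm R
    by (intro add_mono mult_left_mono real_le_lsqrt) simp_all
  finally show ?thesis by (simp add: algebra_simps)
qed

lemma sum_sign_vectors_class_bound_le:
  assumes J: "J \<subseteq> {..<n}"
  shows "(\<Sum>\<sigma>\<in>sign_vectors n. class_bound \<sigma> J) \<le> 2 ^ n * R * (Bp + Bm) * sqrt (real (card J))"
proof -
  have sqrt_sum: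
    "(\<Sum>\<sigma>\<in>sign_vectors n. sqrt (bilinear_form J K \<sigma> \<sigma>)) \<le> 2 ^ n * (R * sqrt (real (card J)))"
    if K: "pos_semidef_on {..<n} K" and diag: "\<And>i. i < n \<Longrightarrow> K i i \<le> R\<^sup>2" for K
  proof -
    have "(\<Sum>i\<in>J. K i i) \<le> (\<Sum>i\<in>J. R\<^sup>2)"
      using diag J by (intro sum_mono) auto
    also have "\<dots> = (R * sqrt (real (card J)))\<^sup>2"
      by (simp add: power_mult_distrib)
    finally have "sqrt (\<Sum>i\<in>J. K i i) \<le> R * sqrt (real (card J))"
      using R by (intro real_le_lsqrt) simp_all
    moreover have "(\<Sum>\<sigma>\<in>sign_vectors n. sqrt (bilinear_form J K \<sigma> \<sigma>)) \<le> 2 ^ n * sqrt (\<Sum>i\<in>J. K i i)"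
      using pos_semidef_on_subset[OF K finite_lessThan J]
      by (intro sum_sign_vectors_sqrt_bilinear_form[OF J]) (simp add: pos_semidef_on_def)
    ultimately show ?thesis
      by (smt (verit) mult_left_mono zero_le_power)
  qed
  have "(\<Sum>\<sigma>\<in>sign_vectors n. class_bound \<sigma> J)
      = Bp * (\<Sum>\<sigma>\<in>sign_vectors n. sqrt (bilinear_form J Kplus \<sigma> \<sigma>))
        + Bm * (\<Sum>\<sigma>\<in>sign_vectors n. sqrt (bilinear_form J Kminus \<sigma> \<sigma>))"
    by (simp add: class_bound_def sum.distrib sum_distrib_left)
  also have "\<dots>
      \<le> Bp * (2 ^ n * (R * sqrt (real (card J)))) + Bm * (2 ^ n * (R * sqrt (real (card J))))"
    using sqrt_sum[OF pos_semidef_Kplus Kplus_Kminus_diag_le(1)]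
      sqrt_sum[OF pos_semidef_Kminus Kplus_Kminus_diag_le(2)] Bp Bm
    by (intro add_mono mult_left_mono) simp_all
  finally show ?thesis by (simp add: algebra_simps)
qed

definition scores :: "('a \<Rightarrow> nat \<Rightarrow> real) set" where
  "scores = {h. \<forall>y\<in>{1..c}. (\<lambda>x. h x y) \<in> HSy S (Splus lam phi I) (Sminus lam phi I) Bp Bm c n D y}"

lemma HS_eq_margin_image:
  "HS S (Splus lam phi I) (Sminus lam phi I) Bp Bm c n D = margin c ` scores"
  unfolding HS_def scores_def by auto

lemma abs_score_le:
  assumes "h \<in> scores" "i < n" "y \<in> {1..c}"
  shows "\<bar>h (point i) y\<bar> \<le> R * (Bp + Bm)"
  using abs_class_function_le[of y "\<lambda>x. h x y" i] assms unfolding scores_def by simp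

lemma bounded_family_scores:
  assumes "\<And>i. i < n \<Longrightarrow> s i \<in> {1..c}"
  shows "bounded_family n scores (\<lambda>h i. h (point i) (s i))"
  using assms by (intro bounded_familyI[where M = "R * (Bp + Bm)"] abs_score_le)

lemma abs_sum_score_le:
  assumes s: "\<And>i. i < n \<Longrightarrow> s i \<in> {1..c}" and h: "h \<in> scores"
  shows "\<bar>\<Sum>i<n. \<sigma> i * h (point i) (s i)\<bar> \<le> (\<Sum>y\<in>{1..c}. class_bound \<sigma> {i. i < n \<and> s i = y})"
proof -
  have "(\<Sum>i<n. \<sigma> i * h (point i) (s i))
      = (\<Sum>y\<in>{1..c}. \<Sum>i\<in>{i \<in> {..<n}. s i = y}. \<sigma> i * h (point i) (s i))"
    using s by (intro sum.group[symmetric]) auto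
  also have "\<dots> = (\<Sum>y\<in>{1..c}. \<Sum>i\<in>{i. i < n \<and> s i = y}. \<sigma> i * h (point i) y)"
    by (intro sum.cong) auto
  also have "\<bar>\<dots>\<bar> \<le> (\<Sum>y\<in>{1..c}. \<bar>\<Sum>i\<in>{i. i < n \<and> s i = y}. \<sigma> i * h (point i) y\<bar>)"
    by (rule sum_abs)
  also have "\<dots> \<le> (\<Sum>y\<in>{1..c}. class_bound \<sigma> {i. i < n \<and> s i = y})"
    using h unfolding scores_def by (intro sum_mono abs_sum_class_function_le) auto
  finally show ?thesis .
qed

lemma abs_rademacher_sum_scores_le:
  assumes s: "\<And>i. i < n \<Longrightarrow> s i \<in> {1..c}" and ne: "scores \<noteq> {}"
  shows "abs_rademacher_sum n scores (\<lambda>h i. h (point i) (s i))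
    \<le> 2 ^ n * R * (Bp + Bm) * sqrt (real c * real n)"
proof -
  have "abs_rademacher_sum n scores (\<lambda>h i. h (point i) (s i))
      \<le> (\<Sum>\<sigma>\<in>sign_vectors n. \<Sum>y\<in>{1..c}. class_bound \<sigma> {i. i < n \<and> s i = y})"
    unfolding abs_rademacher_sum_def by (intro sum_mono cSUP_least[OF ne] abs_sum_score_le s)
  also have "\<dots> = (\<Sum>y\<in>{1..c}. \<Sum>\<sigma>\<in>sign_vectors n. class_bound \<sigma> {i. i < n \<and> s i = y})"
    by (rule sum.swap)
  also have "\<dots> \<le> (\<Sum>y\<in>{1..c}. 2 ^ n * R * (Bp + Bm) * sqrt (real (card {i. i < n \<and> s i = y})))"
    by (intro sum_mono sum_sign_vectors_class_bound_le) auto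
  also have "\<dots> = 2 ^ n * R * (Bp + Bm) * (\<Sum>y\<in>{1..c}. sqrt (real (card {i. i < n \<and> s i = y})))"
    by (simp add: sum_distrib_left)
  also have "\<dots> \<le> 2 ^ n * R * (Bp + Bm) * sqrt (real c * real n)"
    using sum_sqrt_card_fibers_le[of "{1..c}" n s] s Bp Bm R by (intro mult_left_mono) simp_all
  finally show ?thesis .
qed

lemma other_label_in:
  assumes "i < n" "j \<in> {1..c - 1}"
  shows "other_label (label i) j \<in> {1..c}"
  using other_label_image[OF label_in[OF assms(1)]] assms(2) by blast

lemma abs_runner_up_le:
  assumes h: "h \<in> scores" and i: "i < n"
  shows "\<bar>runner_up c h (point i) (label i)\<bar> \<le> R * (Bp + Bm)"
proof -
  have "Max ((\<lambda>j. h (point i) (other_label (label i) j)) ` {1..c - 1})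
      \<in> (\<lambda>j. h (point i) (other_label (label i) j)) ` {1..c - 1}"
    using two_le_c by (intro Max_in) auto
  then show ?thesis
    using abs_score_le[OF h i other_label_in[OF i]]
    by (auto simp: runner_up_eq_Max_other_label[OF label_in[OF i]])
qed

lemma rademacher_sum_runner_up_le:
  assumes ne: "scores \<noteq> {}"
  shows "rademacher_sum n scores (\<lambda>h i. runner_up c h (point i) (label i))
    \<le> (real c - 1) * (2 ^ n * R * (Bp + Bm) * sqrt (real c * real n))"
proof -
  have "rademacher_sum n scores (\<lambda>h i. runner_up c h (point i) (label i))
      = rademacher_sum n scores
          (\<lambda>h i. Max ((\<lambda>j. h (point i) (other_label (label i) j)) ` {1..c - 1}))"
    by (rule rademacher_sum_cong) (simp only: runner_up_eq_Max_other_label[OF label_in])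
  also have "\<dots>
      \<le> (\<Sum>j\<in>{1..c - 1}. rademacher_sum n scores (\<lambda>h i. h (point i) (other_label (label i) j)))"
    using two_le_c ne abs_score_le other_label_in
    by (intro rademacher_sum_Max[where F = "\<lambda>h i j. h (point i) (other_label (label i) j)"
          and M = "R * (Bp + Bm)"]) auto
  also have "\<dots> \<le> (\<Sum>j\<in>{1..c - 1}. 2 ^ n * R * (Bp + Bm) * sqrt (real c * real n))"
  proof (rule sum_mono)
    fix j assume j: "j \<in> {1..c - 1}"
    have labels: "\<And>i. i < n \<Longrightarrow> other_label (label i) j \<in> {1..c}"
      using other_label_in j by blast
    show "rademacher_sum n scores (\<lambda>h i. h (point i) (other_label (label i) j))
        \<le> 2 ^ n * R * (Bp + Bm) * sqrt (real c * real n)"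
      using rademacher_sum_le_abs_rademacher_sum[OF ne bounded_family_scores]
        abs_rademacher_sum_scores_le[OF _ ne, where s = "\<lambda>i. other_label (label i) j"] labels
      by (meson order_trans)
  qed
  also have "\<dots> = (real c - 1) * (2 ^ n * R * (Bp + Bm) * sqrt (real c * real n))"
    using two_le_c by (simp add: of_nat_diff)
  finally show ?thesis .
qed

lemma bounded_family_runner_up: "bounded_family n scores (\<lambda>h i. runner_up c h (point i) (label i))"
  by (intro bounded_familyI[where M = "R * (Bp + Bm)"] abs_runner_up_le)

lemma abs_rademacher_sum_runner_up_le:
  assumes h0: "h0 \<in> scores"
  shows "abs_rademacher_sum n scores (\<lambda>h i. runner_up c h (point i) (label i))
    \<le> 2 * ((real c - 1) * (2 ^ n * R * (Bp + Bm) * sqrt (real c * real n)))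
      + 2 ^ n * (R * (Bp + Bm) * sqrt (real n))"
proof -
  have "(\<Sum>i<n. (runner_up c h0 (point i) (label i))\<^sup>2) \<le> (\<Sum>i<n. (R * (Bp + Bm))\<^sup>2)"
  proof (rule sum_mono)
    fix i assume "i \<in> {..<n}"
    then have "\<bar>runner_up c h0 (point i) (label i)\<bar> \<le> R * (Bp + Bm)"
      by (simp add: abs_runner_up_le[OF h0])
    from power_mono[OF this abs_ge_zero, of 2]
    show "(runner_up c h0 (point i) (label i))\<^sup>2 \<le> (R * (Bp + Bm))\<^sup>2" by simp
  qed
  also have "\<dots> = (R * (Bp + Bm) * sqrt (real n))\<^sup>2"
    by (simp add: power_mult_distrib)
  finally have "sqrt (\<Sum>i<n. (runner_up c h0 (point i) (label i))\<^sup>2) \<le> R * (Bp + Bm) * sqrt (real n)"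
    using Bp Bm R by (intro real_le_lsqrt) simp_all
  then have "(\<Sum>\<sigma>\<in>sign_vectors n. \<bar>\<Sum>i<n. \<sigma> i * runner_up c h0 (point i) (label i)\<bar>)
      \<le> 2 ^ n * (R * (Bp + Bm) * sqrt (real n))"
    using sum_sign_vectors_abs_sum_le[where n = n and v = "\<lambda>i. runner_up c h0 (point i) (label i)"]
    by (smt (verit) mult_left_mono zero_le_power)
  then show ?thesis
    using abs_rademacher_sum_le[OF h0 bounded_family_runner_up]
      rademacher_sum_runner_up_le[of] h0 by fastforce
qed

lemma emp_rad_eq_abs_rademacher_sum:
  assumes ne: "scores \<noteq> {}"
    and bdd: "bounded_family n scores (\<lambda>h i. margin c h (point i) (label i))"
  shows "emp_rad (HS S (Splus lam phi I) (Sminus lam phi I) Bp Bm c n D) n D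
    = abs_rademacher_sum n scores (\<lambda>h i. margin c h (point i) (label i)) / (real n * 2 ^ n)"
proof -
  have image: "{\<bar>1 / real n * (\<Sum>i<n. \<sigma> i * f (point i) (label i))\<bar> | f. f \<in> margin c ` scores}
      = (\<lambda>h. 1 / real n * \<bar>\<Sum>i<n. \<sigma> i * margin c h (point i) (label i)\<bar>) ` scores" for \<sigma>
    by (auto simp: abs_mult)
  have SUP: "(SUP h\<in>scores. 1 / real n * \<bar>\<Sum>i<n. \<sigma> i * margin c h (point i) (label i)\<bar>)
      = 1 / real n * (SUP h\<in>scores. \<bar>\<Sum>i<n. \<sigma> i * margin c h (point i) (label i)\<bar>)" for \<sigma>
    using ne bounded_family_bdd_above(2)[OF bdd] by (intro SUP_mult_left_nonneg) simp_all
  have "emp_rad (HS S (Splus lam phi I) (Sminus lam phi I) Bp Bm c n D) n D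
      = (\<Sum>\<sigma>\<in>sign_vectors n.
          1 / real n * (SUP h\<in>scores. \<bar>\<Sum>i<n. \<sigma> i * margin c h (point i) (label i)\<bar>)) / 2 ^ n"
    unfolding emp_rad_def HS_eq_margin_image Let_def image SUP[symmetric] using ne by simp
  also have "\<dots>
      = abs_rademacher_sum n scores (\<lambda>h i. margin c h (point i) (label i)) / (real n * 2 ^ n)"
    unfolding abs_rademacher_sum_def by (simp add: sum_divide_distrib[symmetric])
  finally show ?thesis .
qed

lemma bounded_family_margin: "bounded_family n scores (\<lambda>h i. margin c h (point i) (label i))"
proof (rule bounded_familyI[where M = "2 * (R * (Bp + Bm))"])
  fix h i assume "h \<in> scores" "i < n"
  then show "\<bar>margin c h (point i) (label i)\<bar> \<le> 2 * (R * (Bp + Bm))"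
    using abs_score_le[OF _ _ label_in] abs_runner_up_le abs_triangle_ineq4
    unfolding margin_eq_runner_up by (smt (verit))
qed

lemma abs_rademacher_sum_margin_le:
  assumes h0: "h0 \<in> scores"
  shows "abs_rademacher_sum n scores (\<lambda>h i. margin c h (point i) (label i))
    \<le> 2 ^ n * (R * (Bp + Bm) * sqrt (real c * real n)
      + 2 * ((real c - 1) * (R * (Bp + Bm) * sqrt (real c * real n)))
      + R * (Bp + Bm) * sqrt (real n))"
proof -
  have scores: "scores \<noteq> {}" using h0 by blast
  have "abs_rademacher_sum n scores (\<lambda>h i. margin c h (point i) (label i))
      = abs_rademacher_sum n scores
          (\<lambda>h i. h (point i) (label i) - runner_up c h (point i) (label i))"
    by (simp only: margin_eq_runner_up)
  also have "\<dots> \<le> abs_rademacher_sum n scores (\<lambda>h i. h (point i) (label i))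
      + abs_rademacher_sum n scores (\<lambda>h i. runner_up c h (point i) (label i))"
    by (rule abs_rademacher_sum_diff[OF scores bounded_family_scores[OF label_in]
          bounded_family_runner_up])
  also have "\<dots> \<le> 2 ^ n * (R * (Bp + Bm) * sqrt (real c * real n)
      + 2 * ((real c - 1) * (R * (Bp + Bm) * sqrt (real c * real n)))
      + R * (Bp + Bm) * sqrt (real n))"
    using abs_rademacher_sum_scores_le[where s = "\<lambda>i. label i", OF label_in scores]
      abs_rademacher_sum_runner_up_le[OF h0]
    by (simp add: algebra_simps)
  finally show ?thesis .
qed

lemma emp_rad_le:
  assumes n: "0 < n"
  shows "emp_rad (HS S (Splus lam phi I) (Sminus lam phi I) Bp Bm c n D) n D
    \<le> R * (Bp + Bm) * (real c * (2 * real c - 1)) / sqrt (real n)"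
proof (cases "scores = {}")
  case True
  then have "emp_rad (HS S (Splus lam phi I) (Sminus lam phi I) Bp Bm c n D) n D = 0"
    unfolding emp_rad_def HS_eq_margin_image by simp
  moreover have "0 \<le> R * (Bp + Bm) * (real c * (2 * real c - 1)) / sqrt (real n)"
    using R Bp Bm two_le_c by simp
  ultimately show ?thesis by simp
next
  case False
  then obtain h0 where h0: "h0 \<in> scores" by blast
  let ?K = "R * (Bp + Bm)"
  have "emp_rad (HS S (Splus lam phi I) (Sminus lam phi I) Bp Bm c n D) n D
      \<le> (?K * sqrt (real c * real n) + 2 * ((real c - 1) * (?K * sqrt (real c * real n)))
        + ?K * sqrt (real n)) / real n"
    using abs_rademacher_sum_margin_le[OF h0] n
    by (simp add: emp_rad_eq_abs_rademacher_sum[OF False bounded_family_margin] field_simps)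
  also have "\<dots> \<le> ?K * (real c * (2 * real c - 1)) / sqrt (real n)"
    using two_le_c n R Bp Bm
    by (intro margin_rademacher_arith[where c = "real c" and n = "real n"]) simp_all
  finally show ?thesis .
qed

end

section \<open>Expected Rademacher complexity\<close>

lemma rademacher_le_of_AE_emp_rad_le:
  assumes P: "prob_space P" and bound: "AE D in PiM {..<n} (\<lambda>_. P). emp_rad (FD D) n D \<le> b"
  shows "rademacher P n FD \<le> ennreal b"
proof -
  have M: "prob_space (PiM {..<n} (\<lambda>_. P))"
    using P by (rule prob_space_PiM)
  have "rademacher P n FD \<le> (\<integral>\<^sup>+ D. ennreal b \<partial>PiM {..<n} (\<lambda>_. P))"
    unfolding rademacher_def using bound
    by (intro nn_integral_mono_AE) (auto elim!: eventually_mono intro: ennreal_leI)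
  also have "\<dots> = ennreal b"
    using prob_space.emeasure_space_1[OF M] by simp
  finally show ?thesis .
qed

theorem lemmaE3:
  fixes X :: "'a::euclidean_space set" and S :: "'a \<Rightarrow> 'a \<Rightarrow> real"
    and lam :: "nat \<Rightarrow> real" and phi :: "nat \<Rightarrow> 'a \<Rightarrow> real" and I :: "nat set"
    and P :: "('a \<times> nat) measure" and c n :: nat and C Bp Bm R \<delta> :: real
  assumes "compact X" and "c \<ge> 2" and "n > 0"
    and "prob_space P" and "sets P = sets (borel \<Otimes>\<^sub>M count_space UNIV)"
    and "AE z in P. fst z \<in> X \<and> snd z \<in> {1..c}"
    and "\<forall>x\<in>X. \<forall>t\<in>X. S x t = S t x"
    and "continuous_on (X \<times> X) (\<lambda>(x, t). S x t)"
    and "\<forall>x\<in>X. \<forall>t\<in>X. 0 \<le> S x t \<and> S x t \<le> 1"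
    and "\<forall>k\<in>I. phi k \<in> borel_measurable borel"
    and "\<forall>j\<in>I. \<forall>k\<in>I. set_integrable lborel X (\<lambda>t. phi j t * phi k t) \<and>
           (LINT t:X|lborel. phi j t * phi k t) = (if j = k then 1 else 0)"
    and "\<forall>k\<in>I. \<forall>x\<in>X. set_integrable lborel X (\<lambda>t. S x t * phi k t) \<and>
           (LINT t:X|lborel. S x t * phi k t) = lam k * phi k x"
    and "\<forall>x\<in>X. \<forall>t\<in>X. S x t = (\<Sum>\<^sub>\<infinity>k\<in>I. lam k * phi k x * phi k t)"
    and "C > 0"
    and "\<forall>x\<in>X. (\<lambda>k. \<bar>lam k\<bar> * (phi k x)\<^sup>2) summable_on I \<and>
           (\<Sum>\<^sub>\<infinity>k\<in>I. \<bar>lam k\<bar> * (phi k x)\<^sup>2) < C"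
    and "Bp > 0" and "Bm > 0" and "R > 0"
    and "\<forall>x\<in>X. \<bar>Splus lam phi I x x\<bar> \<le> R\<^sup>2"
    and "\<forall>x\<in>X. \<bar>Sminus lam phi I x x\<bar> \<le> R\<^sup>2"
    and "0 < \<delta>" and "\<delta> < 1"
  shows "measure (PiM {..<n} (\<lambda>_. P))
           {D \<in> space (PiM {..<n} (\<lambda>_. P)).
              rademacher P n (HS S (Splus lam phi I) (Sminus lam phi I) Bp Bm c n)
              \<le> ennreal (R * (2 * real c - 1) * real c * (Bp + Bm) / sqrt (real n)
                  + 2 * real c * (2 * real c - 1) * (Bp + Bm) * R\<^sup>2
                    * sqrt (ln (2 / \<delta>) / (2 * real n)))}
         \<ge> 1 - \<delta>"
proof -
  let ?M = "PiM {..<n} (\<lambda>_. P)"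
  let ?H = "HS S (Splus lam phi I) (Sminus lam phi I) Bp Bm c n"
  define bound where "bound = R * (2 * real c - 1) * real c * (Bp + Bm) / sqrt (real n)"
  define slack where "slack = 2 * real c * (2 * real c - 1) * (Bp + Bm) * R\<^sup>2
    * sqrt (ln (2 / \<delta>) / (2 * real n))"
  have "AE D in ?M. \<forall>i\<in>{..<n}. fst (D i) \<in> X \<and> snd (D i) \<in> {1..c}"
    using assms(4,6) by (intro eventually_ball_finite ballI AE_PiM_component) auto
  then have "AE D in ?M. emp_rad (?H D) n D \<le> bound"
  proof (rule eventually_mono)
    fix D assume "\<forall>i\<in>{..<n}. fst (D i) \<in> X \<and> snd (D i) \<in> {1..c}"
    then interpret labeled_sample X S lam phi I c n D Bp Bm R
      using assms(2,13,15-20) by unfold_locales auto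
    show "emp_rad (?H D) n D \<le> bound"
      using emp_rad_le[OF assms(3)] by (simp add: bound_def ac_simps)
  qed
  then have "rademacher P n ?H \<le> ennreal bound"
    by (rule rademacher_le_of_AE_emp_rad_le[OF assms(4)])
  also have "\<dots> \<le> ennreal (bound + slack)"
    using assms(2,3,16-18,21,22) by (intro ennreal_leI) (simp add: slack_def)
  finally have "{D \<in> space ?M. rademacher P n ?H \<le> ennreal (bound + slack)} = space ?M"
    by simp
  then show ?thesis
    using prob_space.prob_space[OF prob_space_PiM[where I = "{..<n}", OF assms(4)]] assms(21)
    by (simp add: bound_def slack_def)
qed

end
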